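(* Let $k$ be a field of prime characteristic $p$, and let $V_1,V_2,\ldots$ be a sequence of $T$-spaces of $k_0\langle X\rangle$ such that (a) $(V_iV_j)^S=V_{i+j}$ for all $i,j\ge1$, and (b) $V_{2m+1}\subseteq V_{m+1}+V_1$ for all $m\ge1$. Then for any integers $r,s$ with $0<r<s$, we have $V_{s+t(s-r)}\subseteq V_r+V_s$ for all integers $t\ge0$.
   Context: $X=\{x_1,x_2,\ldots\}$ is a countably infinite set and $k_0\langle X\rangle$ denotes the free associative (non-unital) $k$-algebra on $X$. A $T$-space is a $k$-subspace of $k_0\langle X\rangle$ invariant under every algebra endomorphism of $k_0\langle X\rangle$ (i.e. closed under substitution of arbitrary elements of $k_0\langle X\rangle$ for the variables). For a subset $A$, $A^S$ (or $(A)^S$) denotes the $T$-space generated by $A$. For subsets $A,B$, $AB$ denotes the set of products $\{ab: a\in A, b\in B\}$. Sums of $T$-spaces are sums of subspaces. *)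

theory Defs
  imports Main "HOL-Library.Poly_Mapping" "HOL-Computational_Algebra.Primes"
begin

text \<open>Elements of the free associative algebra over k on X = {x_0, x_1, ...}:
  finitely supported k-valued functions on words (lists of variable indices).
  The non-unital algebra k_0<X> consists of those with no constant term.\<close>

type_synonym 'k fa = "nat list \<Rightarrow>\<^sub>0 'k"

definition FA :: "'k::field fa set" where
  "FA = {p. [] \<notin> Poly_Mapping.keys p}"

definition fa_mult :: "'k::field fa \<Rightarrow> 'k fa \<Rightarrow> 'k fa" where
  "fa_mult p q = (\<Sum>u\<in>Poly_Mapping.keys p. \<Sum>v\<in>Poly_Mapping.keys q. Poly_Mapping.single (u @ v) (Poly_Mapping.lookup p u * Poly_Mapping.lookup q v))"

definition fa_smult :: "'k::field \<Rightarrow> 'k fa \<Rightarrow> 'k fa" where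
  "fa_smult c p = Poly_Mapping.map (\<lambda>x. c * x) p"

fun word_eval :: "(nat \<Rightarrow> 'k::field fa) \<Rightarrow> nat list \<Rightarrow> 'k fa" where
  "word_eval \<sigma> [] = Poly_Mapping.single [] 1"
| "word_eval \<sigma> (i # w) = fa_mult (\<sigma> i) (word_eval \<sigma> w)"

definition fa_subst :: "(nat \<Rightarrow> 'k::field fa) \<Rightarrow> 'k fa \<Rightarrow> 'k fa" where
  "fa_subst \<sigma> p = (\<Sum>w\<in>Poly_Mapping.keys p. fa_smult (Poly_Mapping.lookup p w) (word_eval \<sigma> w))"

definition subspace_FA :: "'k::field fa set \<Rightarrow> bool" where
  "subspace_FA V \<longleftrightarrow> V \<subseteq> FA \<and> 0 \<in> V \<and> (\<forall>a\<in>V. \<forall>b\<in>V. a + b \<in> V)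
     \<and> (\<forall>c. \<forall>a\<in>V. fa_smult c a \<in> V)"

definition Tspace :: "'k::field fa set \<Rightarrow> bool" where
  "Tspace V \<longleftrightarrow> subspace_FA V \<and>
     (\<forall>\<sigma>. (\<forall>i. \<sigma> i \<in> FA) \<longrightarrow> (\<forall>p\<in>V. fa_subst \<sigma> p \<in> V))"

definition Tgen :: "'k::field fa set \<Rightarrow> 'k fa set" where
  "Tgen A = \<Inter>{V. Tspace V \<and> A \<subseteq> V}"

definition set_prod :: "'k::field fa set \<Rightarrow> 'k fa set \<Rightarrow> 'k fa set" where
  "set_prod A B = {fa_mult a b | a b. a \<in> A \<and> b \<in> B}"

definition space_sum :: "'k::field fa set \<Rightarrow> 'k fa set \<Rightarrow> 'k fa set" where
  "space_sum A B = {a + b | a b. a \<in> A \<and> b \<in> B}"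

end

theory Submission
  imports Defs
begin

text \<open>Multiplying the inclusion V(2m+1) \<subseteq> V(m+1) + V(1) on the right by V(c-1) and taking
  T-space closures gives V(c+2m) \<subseteq> V(c+m) + V(c) for all c, m \<ge> 1. With d = s - r this places
  V(r+(j+2)d) inside V(r+(j+1)d) + V(r+jd), so an induction along the progression r, r+d, r+2d, ...
  keeps every term inside the T-space V(r) + V(s).\<close>

lemma lookup_fa_smult: "Poly_Mapping.lookup (fa_smult c p) w = c * Poly_Mapping.lookup p w"
  unfolding fa_smult_def by transfer (simp add: when_def)

lemma fa_smult_add_right: "fa_smult c (p + q) = fa_smult c p + fa_smult c q"
  by (rule poly_mapping_eqI) (simp add: lookup_fa_smult lookup_add algebra_simps)

lemma fa_smult_add_left: "fa_smult (c + d) p = fa_smult c p + fa_smult d p"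
  by (rule poly_mapping_eqI) (simp add: lookup_fa_smult lookup_add algebra_simps)

lemma fa_smult_zero_left: "fa_smult 0 p = 0"
  by (rule poly_mapping_eqI) (simp add: lookup_fa_smult)

lemma fa_mult_eq_sum_over:
  assumes "finite S" "finite T" "Poly_Mapping.keys p \<subseteq> S" "Poly_Mapping.keys q \<subseteq> T"
  shows "fa_mult p q = (\<Sum>u\<in>S. \<Sum>v\<in>T.
           Poly_Mapping.single (u @ v) (Poly_Mapping.lookup p u * Poly_Mapping.lookup q v))"
proof -
  have "fa_mult p q = (\<Sum>u\<in>S. \<Sum>v\<in>Poly_Mapping.keys q.
           Poly_Mapping.single (u @ v) (Poly_Mapping.lookup p u * Poly_Mapping.lookup q v))"
    unfolding fa_mult_def
    by (rule sum.mono_neutral_left) (use assms in \<open>auto simp: in_keys_iff\<close>)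
  also have "\<dots> = (\<Sum>u\<in>S. \<Sum>v\<in>T.
           Poly_Mapping.single (u @ v) (Poly_Mapping.lookup p u * Poly_Mapping.lookup q v))"
    by (rule sum.cong[OF refl], rule sum.mono_neutral_left)
      (use assms in \<open>auto simp: in_keys_iff\<close>)
  finally show ?thesis .
qed

lemma fa_mult_add_left: "fa_mult (p + q) r = fa_mult p r + fa_mult q r"
proof -
  let ?S = "Poly_Mapping.keys p \<union> Poly_Mapping.keys q" and ?T = "Poly_Mapping.keys r"
  have fin: "finite ?S" "finite ?T" by auto
  show ?thesis
    by (simp add: fa_mult_eq_sum_over[OF fin keys_add] fa_mult_eq_sum_over[OF fin, of p r]
        fa_mult_eq_sum_over[OF fin, of q r] lookup_add distrib_right single_add sum.distrib)
qed

lemma fa_subst_eq_sum_over: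
  assumes "finite S" "Poly_Mapping.keys p \<subseteq> S"
  shows "fa_subst \<sigma> p = (\<Sum>w\<in>S. fa_smult (Poly_Mapping.lookup p w) (word_eval \<sigma> w))"
  unfolding fa_subst_def
  by (rule sum.mono_neutral_left) (use assms in \<open>auto simp: in_keys_iff fa_smult_zero_left\<close>)

lemma fa_subst_add: "fa_subst \<sigma> (p + q) = fa_subst \<sigma> p + fa_subst \<sigma> q"
proof -
  let ?S = "Poly_Mapping.keys p \<union> Poly_Mapping.keys q"
  have fin: "finite ?S" by auto
  show ?thesis
    by (simp add: fa_subst_eq_sum_over[OF fin keys_add] fa_subst_eq_sum_over[OF fin, of p]
        fa_subst_eq_sum_over[OF fin, of q] lookup_add fa_smult_add_left sum.distrib)
qed

lemma FA_add: "p \<in> FA \<Longrightarrow> q \<in> FA \<Longrightarrow> p + q \<in> FA"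
  using keys_add[of p q] unfolding FA_def by auto

lemma Tspace_zero: "Tspace W \<Longrightarrow> 0 \<in> W"
  unfolding Tspace_def subspace_FA_def by blast

lemma Tspace_add: "Tspace W \<Longrightarrow> p \<in> W \<Longrightarrow> q \<in> W \<Longrightarrow> p + q \<in> W"
  unfolding Tspace_def subspace_FA_def by blast

lemma Tgen_least: "Tspace W \<Longrightarrow> A \<subseteq> W \<Longrightarrow> Tgen A \<subseteq> W"
  unfolding Tgen_def by blast

lemma subset_Tgen: "A \<subseteq> Tgen A"
  unfolding Tgen_def by blast

lemma space_sumE:
  assumes "x \<in> space_sum A B"
  obtains a b where "x = a + b" "a \<in> A" "b \<in> B"
  using assms unfolding space_sum_def by blast

lemma space_sumI: "a \<in> A \<Longrightarrow> b \<in> B \<Longrightarrow> a + b \<in> space_sum A B"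
  unfolding space_sum_def by blast

lemma space_sum_mono: "A \<subseteq> A' \<Longrightarrow> B \<subseteq> B' \<Longrightarrow> space_sum A B \<subseteq> space_sum A' B'"
  unfolding space_sum_def by blast

lemma space_sum_least: "Tspace W \<Longrightarrow> A \<subseteq> W \<Longrightarrow> B \<subseteq> W \<Longrightarrow> space_sum A B \<subseteq> W"
  by (auto elim!: space_sumE intro: Tspace_add)

lemma space_sum_upper_left: "0 \<in> B \<Longrightarrow> A \<subseteq> space_sum A B"
  using space_sumI[of _ A 0 B] by auto

lemma space_sum_upper_right: "0 \<in> A \<Longrightarrow> B \<subseteq> space_sum A B"
  using space_sumI[of 0 A _ B] by auto

lemma Tspace_space_sum:
  assumes A: "Tspace A" and B: "Tspace B"
  shows "Tspace (space_sum A B)"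
  unfolding Tspace_def subspace_FA_def
proof (intro conjI allI impI ballI)
  show "space_sum A B \<subseteq> FA"
    using A B unfolding Tspace_def subspace_FA_def by (auto elim!: space_sumE intro: FA_add)
  show "0 \<in> space_sum A B"
    using space_sumI[OF Tspace_zero[OF A] Tspace_zero[OF B]] by simp
next
  fix x y assume "x \<in> space_sum A B" "y \<in> space_sum A B"
  then obtain a b a' b' where "x = a + b" "a \<in> A" "b \<in> B" "y = a' + b'" "a' \<in> A" "b' \<in> B"
    by (auto elim!: space_sumE)
  then have "x + y = (a + a') + (b + b')" "a + a' \<in> A" "b + b' \<in> B"
    using A B by (auto simp: algebra_simps intro: Tspace_add)
  then show "x + y \<in> space_sum A B" by (simp add: space_sumI)
next
  fix c x assume "x \<in> space_sum A B"
  then obtain a b where "x = a + b" "a \<in> A" "b \<in> B" by (rule space_sumE)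
  then show "fa_smult c x \<in> space_sum A B"
    using A B unfolding Tspace_def subspace_FA_def by (simp add: fa_smult_add_right space_sumI)
next
  fix \<sigma> :: "nat \<Rightarrow> 'a fa" and x assume "\<forall>i. \<sigma> i \<in> FA" "x \<in> space_sum A B"
  then obtain a b where "x = a + b" "a \<in> A" "b \<in> B" by (auto elim: space_sumE)
  with \<open>\<forall>i. \<sigma> i \<in> FA\<close> show "fa_subst \<sigma> x \<in> space_sum A B"
    using A B unfolding Tspace_def by (simp add: fa_subst_add space_sumI)
qed

lemma set_prod_mono: "A \<subseteq> A' \<Longrightarrow> B \<subseteq> B' \<Longrightarrow> set_prod A B \<subseteq> set_prod A' B'"
  unfolding set_prod_def by blast

lemma set_prod_space_sum_left:
  "set_prod (space_sum A B) C \<subseteq> space_sum (set_prod A C) (set_prod B C)"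
  unfolding set_prod_def by (fastforce elim!: space_sumE simp: fa_mult_add_left intro: space_sumI)

lemma V_shift:
  fixes V :: "nat \<Rightarrow> 'k::field fa set"
  assumes T: "\<And>i. i \<ge> 1 \<Longrightarrow> Tspace (V i)"
    and mult: "\<And>i j. i \<ge> 1 \<Longrightarrow> j \<ge> 1 \<Longrightarrow> Tgen (set_prod (V i) (V j)) = V (i + j)"
    and pos: "n \<ge> 1" "a \<ge> 1" "b \<ge> 1" "k \<ge> 1"
    and incl: "V n \<subseteq> space_sum (V a) (V b)"
  shows "V (n + k) \<subseteq> space_sum (V (a + k)) (V (b + k))"
proof -
  have "set_prod (V n) (V k) \<subseteq> space_sum (set_prod (V a) (V k)) (set_prod (V b) (V k))"
    using set_prod_mono[OF incl order_refl] set_prod_space_sum_left by blast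
  also have "\<dots> \<subseteq> space_sum (V (a + k)) (V (b + k))"
    using subset_Tgen mult pos by (intro space_sum_mono) blast+
  finally have "Tgen (set_prod (V n) (V k)) \<subseteq> space_sum (V (a + k)) (V (b + k))"
    using T pos by (intro Tgen_least Tspace_space_sum) auto
  then show ?thesis
    using mult pos by simp
qed

lemma V_recurrence:
  fixes V :: "nat \<Rightarrow> 'k::field fa set"
  assumes T: "\<And>i. i \<ge> 1 \<Longrightarrow> Tspace (V i)"
    and mult: "\<And>i j. i \<ge> 1 \<Longrightarrow> j \<ge> 1 \<Longrightarrow> Tgen (set_prod (V i) (V j)) = V (i + j)"
    and odd: "\<And>m. m \<ge> 1 \<Longrightarrow> V (2 * m + 1) \<subseteq> space_sum (V (m + 1)) (V 1)"
    and "c \<ge> 1" "m \<ge> 1"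
  shows "V (c + 2 * m) \<subseteq> space_sum (V (c + m)) (V c)"
proof (cases "c = 1")
  case True
  then show ?thesis using odd[OF \<open>m \<ge> 1\<close>] by (simp add: add.commute)
next
  case False
  have "V (2 * m + 1 + (c - 1)) \<subseteq> space_sum (V (m + 1 + (c - 1))) (V (1 + (c - 1)))"
    using V_shift[OF T mult _ _ _ _ odd[OF \<open>m \<ge> 1\<close>], of "c - 1"] False \<open>c \<ge> 1\<close> by simp
  moreover have "2 * m + 1 + (c - 1) = c + 2 * m" "m + 1 + (c - 1) = c + m" "1 + (c - 1) = c"
    using \<open>c \<ge> 1\<close> by auto
  ultimately show ?thesis by (simp add: add.commute)
qed

lemma V_progression_subset:
  fixes V :: "nat \<Rightarrow> 'k::field fa set"
  assumes rec: "\<And>c m. c \<ge> 1 \<Longrightarrow> m \<ge> 1 \<Longrightarrow> V (c + 2 * m) \<subseteq> space_sum (V (c + m)) (V c)"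
    and "r \<ge> 1" "d \<ge> 1" "Tspace W"
    and "V r \<subseteq> W" "V (r + d) \<subseteq> W"
  shows "V (r + j * d) \<subseteq> W"
proof -
  have "V (r + j * d) \<subseteq> W \<and> V (r + Suc j * d) \<subseteq> W" for j
  proof (induction j)
    case 0
    then show ?case using assms by simp
  next
    case (Suc j)
    have "r + Suc (Suc j) * d = (r + j * d) + 2 * d" by simp
    then have "V (r + Suc (Suc j) * d) = V ((r + j * d) + 2 * d)" by (rule arg_cong)
    also have "\<dots> \<subseteq> space_sum (V (r + j * d + d)) (V (r + j * d))"
      using rec assms by simp
    also have "\<dots> \<subseteq> W"
      using Suc.IH \<open>Tspace W\<close> by (intro space_sum_least) (auto simp: algebra_simps)
    finally show ?case using Suc.IH by simp
  qed
  then show ?thesis by blast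
qed

theorem lemma2p1:
  fixes V :: "nat \<Rightarrow> 'k::field fa set"
  assumes char: "prime CHAR('k)"
    and T: "\<And>i. i \<ge> 1 \<Longrightarrow> Tspace (V i)"
    and a: "\<And>i j. i \<ge> 1 \<Longrightarrow> j \<ge> 1 \<Longrightarrow> Tgen (set_prod (V i) (V j)) = V (i + j)"
    and b: "\<And>m. m \<ge> 1 \<Longrightarrow> V (2 * m + 1) \<subseteq> space_sum (V (m + 1)) (V 1)"
    and rs: "0 < r" "r < s"
  shows "V (s + t * (s - r)) \<subseteq> space_sum (V r) (V s)"
proof -
  define d where "d = s - r"
  have Tr: "Tspace (V r)" and Ts: "Tspace (V s)" using T rs by auto
  have s_eq: "s = r + d" using rs by (simp add: d_def)
  have "V (r + Suc t * d) \<subseteq> space_sum (V r) (V s)"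
  proof (rule V_progression_subset)
    show "V (c + 2 * m) \<subseteq> space_sum (V (c + m)) (V c)" if "c \<ge> 1" "m \<ge> 1" for c m
      using V_recurrence[OF T a b that] .
    show "Tspace (space_sum (V r) (V s))" using Tr Ts by (rule Tspace_space_sum)
    show "V r \<subseteq> space_sum (V r) (V s)" using Tspace_zero[OF Ts] by (rule space_sum_upper_left)
    show "V (r + d) \<subseteq> space_sum (V r) (V s)"
      using Tspace_zero[OF Tr] s_eq by (simp add: space_sum_upper_right)
  qed (use rs d_def in auto)
  moreover have "s + t * (s - r) = r + Suc t * d" using s_eq by (simp add: d_def)
  ultimately show ?thesis by simp
qed

end
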